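(* Let $\mathbb{K}$ be a field of characteristic $0$, $I\subset\mathbb{K}[x_1,\dots,x_n]$ a full monomial ideal with $\mathbb{K}[\mathbf{x}]/I$ finite-dimensional, and $\mathfrak{g}=\operatorname{Der}(\mathbb{K}[\mathbf{x}]/I)=\bigoplus_{\alpha\in\mathbb{Z}^n}\mathfrak{g}_\alpha$ its weight decomposition. Let $\alpha\in\mathbb{Z}^n$. Then: (1) If $\alpha\in\mathbb{Z}_{\ge0}^n$, then $\dim\mathfrak{g}_\alpha=\#E_\alpha$. (2) If $\alpha\notin\mathbb{Z}_{\ge0}^n$, $\alpha+e_k\in\mathbb{Z}_{\ge0}^n$ for some $1\le k\le n$, and $\dim\mathfrak{g}_{\alpha+e_k}=0$, then $\dim\mathfrak{g}_\alpha=\#E_\alpha$; moreover this number equals $1$ if $\alpha+e_k\in\operatorname{supp}^c(I)$ and $0$ otherwise.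
   Context: Let $e_1,\dots,e_n$ be the standard basis of $\mathbb{Z}^n$. For a monomial ideal $I\subset\mathbb{K}[\mathbf{x}]$, $\operatorname{supp}(I)=\{m\in\mathbb{Z}^n_{\ge0}\mid \mathbf{x}^m\in I\}$ and $\operatorname{supp}^c(I)=\mathbb{Z}^n_{\ge0}\setminus\operatorname{supp}(I)$. $I$ is full if $x_i\notin I$ for all $i$. The algebra $\mathbb{K}[\mathbf{x}]/I$ is $\mathbb{Z}^n$-graded with $\bar{\mathbf{x}}^m$ (image of $\mathbf{x}^m$) of degree $m$, equivalently the torus $T=\mathbb{G}_m^n$ acts by $\mathbf{t}\cdot x_i=t_ix_i$. $\operatorname{Der}(\mathbb{K}[\mathbf{x}]/I)$ is the Lie algebra of $\mathbb{K}$-derivations (equal to the Lie algebra of $\operatorname{Aut}_{\mathbb{K}}(\mathbb{K}[\mathbf{x}]/I)$), and for $\alpha\in\mathbb{Z}^n$, $\mathfrak{g}_\alpha$ is the weight space for the adjoint action of $T$, i.e. the space of derivations $\partial$ with $\partial(\bar{\mathbf{x}}^m)\in\mathbb{K}\,\bar{\mathbf{x}}^{m+\alpha}$ for all $m\in\mathbb{Z}^n_{\ge0}$ (where $\bar{\mathbf{x}}^{m+\alpha}:=0$ if $m+\alpha\notin\mathbb{Z}^n_{\ge0}$). For $\alpha\in\mathbb{Z}^n$, $E_\alpha:=\{e_i\mid \alpha+e_i\in\operatorname{supp}^c(I)\}$. *)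

theory Defs
  imports Complex_Main "HOL-Library.Function_Algebras"
begin

text \<open>Exponent vectors in Z_{>=0}^n are functions 'n => nat, weights in Z^n are
functions 'n => int, with 'n a finite index type of cardinality n.
A monomial ideal I is encoded by its support S = supp(I), an up-closed set of
exponent vectors (monomial ideals correspond bijectively to such sets).\<close>

definition monomial_support :: "('n \<Rightarrow> nat) set \<Rightarrow> bool" where
  "monomial_support S \<longleftrightarrow> (\<forall>m m'. m \<in> S \<longrightarrow> (\<forall>i. m i \<le> m' i) \<longrightarrow> m' \<in> S)"

definition unit_nat :: "'n \<Rightarrow> ('n \<Rightarrow> nat)" where
  "unit_nat k = (\<lambda>j. if j = k then 1 else 0)"

definition unit_int :: "'n \<Rightarrow> ('n \<Rightarrow> int)" where
  "unit_int k = (\<lambda>j. if j = k then 1 else 0)"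

definition full_support :: "('n \<Rightarrow> nat) set \<Rightarrow> bool" where
  "full_support S \<longleftrightarrow> (\<forall>i. unit_nat i \<notin> S)"

definition nonneg :: "('n \<Rightarrow> int) \<Rightarrow> bool" where
  "nonneg \<beta> \<longleftrightarrow> (\<forall>i. 0 \<le> \<beta> i)"

definition to_nat_vec :: "('n \<Rightarrow> int) \<Rightarrow> ('n \<Rightarrow> nat)" where
  "to_nat_vec \<beta> = (\<lambda>i. nat (\<beta> i))"

definition add_int :: "('n \<Rightarrow> int) \<Rightarrow> ('n \<Rightarrow> int) \<Rightarrow> ('n \<Rightarrow> int)" where
  "add_int \<alpha> \<beta> = (\<lambda>i. \<alpha> i + \<beta> i)"

definition in_suppc :: "('n \<Rightarrow> nat) set \<Rightarrow> ('n \<Rightarrow> int) \<Rightarrow> bool" where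
  "in_suppc S \<beta> \<longleftrightarrow> nonneg \<beta> \<and> to_nat_vec \<beta> \<notin> S"

definition E_set :: "('n \<Rightarrow> nat) set \<Rightarrow> ('n \<Rightarrow> int) \<Rightarrow> 'n set" where
  "E_set S \<alpha> = {i. in_suppc S (add_int \<alpha> (unit_int i))}"

text \<open>The quotient algebra K[x]/I, realised on its monomial basis
{xbar^m | m in supp^c(I)}: an element is its coefficient function, vanishing on supp(I).\<close>
definition qalg :: "('n \<Rightarrow> nat) set \<Rightarrow> (('n \<Rightarrow> nat) \<Rightarrow> 'k::field) set" where
  "qalg S = {f. \<forall>m\<in>S. f m = 0}"

definition qmult :: "('n \<Rightarrow> nat) set \<Rightarrow> (('n \<Rightarrow> nat) \<Rightarrow> 'k::field)
    \<Rightarrow> (('n \<Rightarrow> nat) \<Rightarrow> 'k) \<Rightarrow> (('n \<Rightarrow> nat) \<Rightarrow> 'k)" where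
  "qmult S f g = (\<lambda>m. if m \<in> S then 0
      else (\<Sum>a\<in>{a. \<forall>i. a i \<le> m i}. f a * g (\<lambda>i. m i - a i)))"

definition qmono :: "('n \<Rightarrow> nat) set \<Rightarrow> ('n \<Rightarrow> nat) \<Rightarrow> (('n \<Rightarrow> nat) \<Rightarrow> 'k::field)" where
  "qmono S m = (\<lambda>m'. if m' = m \<and> m \<notin> S then 1 else 0)"

definition qmono_int :: "('n \<Rightarrow> nat) set \<Rightarrow> ('n \<Rightarrow> int) \<Rightarrow> (('n \<Rightarrow> nat) \<Rightarrow> 'k::field)" where
  "qmono_int S \<beta> = (if nonneg \<beta> then qmono S (to_nat_vec \<beta>) else (\<lambda>_. 0))"

text \<open>K-derivations of K[x]/I, as maps on qalg S (extended by 0 outside it).\<close>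
definition is_derivation :: "('n \<Rightarrow> nat) set
    \<Rightarrow> ((('n \<Rightarrow> nat) \<Rightarrow> 'k::field) \<Rightarrow> (('n \<Rightarrow> nat) \<Rightarrow> 'k)) \<Rightarrow> bool" where
  "is_derivation S D \<longleftrightarrow>
     (\<forall>f. f \<notin> qalg S \<longrightarrow> D f = (\<lambda>_. 0)) \<and>
     (\<forall>f\<in>qalg S. D f \<in> qalg S) \<and>
     (\<forall>f\<in>qalg S. \<forall>g\<in>qalg S. D (\<lambda>m. f m + g m) = (\<lambda>m. D f m + D g m)) \<and>
     (\<forall>c. \<forall>f\<in>qalg S. D (\<lambda>m. c * f m) = (\<lambda>m. c * D f m)) \<and>
     (\<forall>f\<in>qalg S. \<forall>g\<in>qalg S.
        D (qmult S f g) = (\<lambda>m. qmult S (D f) g m + qmult S f (D g) m))"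

definition weight_space :: "('n \<Rightarrow> nat) set \<Rightarrow> ('n \<Rightarrow> int)
    \<Rightarrow> ((('n \<Rightarrow> nat) \<Rightarrow> 'k::field) \<Rightarrow> (('n \<Rightarrow> nat) \<Rightarrow> 'k)) set" where
  "weight_space S \<alpha> = {D. is_derivation S D \<and>
     (\<forall>m. \<exists>c. D (qmono S m) = (\<lambda>m'. c * qmono_int S (\<lambda>i. int (m i) + \<alpha> i) m'))}"

definition dscale :: "'k::field \<Rightarrow> ((('n \<Rightarrow> nat) \<Rightarrow> 'k) \<Rightarrow> (('n \<Rightarrow> nat) \<Rightarrow> 'k))
    \<Rightarrow> ((('n \<Rightarrow> nat) \<Rightarrow> 'k) \<Rightarrow> (('n \<Rightarrow> nat) \<Rightarrow> 'k))" where
  "dscale c D = (\<lambda>f m. c * D f m)"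

definition dim_weight :: "('n \<Rightarrow> nat) set \<Rightarrow> ('n \<Rightarrow> int) \<Rightarrow> 'k::field itself \<Rightarrow> nat" where
  "dim_weight S \<alpha> _ = vector_space.dim (dscale :: 'k \<Rightarrow> _) (weight_space S \<alpha> :: ((('n \<Rightarrow> nat) \<Rightarrow> 'k) \<Rightarrow> _) set)"

end

theory Submission
  imports Defs "HOL-Library.FuncSet" "HOL-Library.Indicator_Function"
begin

text \<open>
  A derivation of weight \<alpha> sends each generator \<open>x\<^sub>i\<close> to a multiple \<open>c\<^sub>i x^(\<alpha>+e\<^sub>i)\<close>, which
  can be nonzero only for \<open>i \<in> E\<^sub>\<alpha>\<close>; by the Leibniz rule it is then the operator
  \<open>x^\<alpha> \<Sum> c\<^sub>i x\<^sub>i \<partial>\<^sub>i\<close>, i.e. \<open>x^m \<mapsto> \<langle>m, c\<rangle> x^(m+\<alpha>)\<close>. Conversely this operator is a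
  derivation of the quotient for every such \<open>c\<close> as soon as each \<open>x^\<alpha> x\<^sub>i \<partial>\<^sub>i\<close> with
  \<open>i \<in> E\<^sub>\<alpha>\<close> maps \<open>I\<close> into \<open>I\<close>; the operators with \<open>c = e\<^sub>i\<close> then form a basis of
  \<open>\<g>\<^sub>\<alpha>\<close>, so \<open>dim \<g>\<^sub>\<alpha> = #E\<^sub>\<alpha>\<close>. For \<open>\<alpha> \<ge> 0\<close> this stability is automatic. In the
  second case \<open>\<alpha> = \<beta> - e\<^sub>k\<close> with \<open>\<beta> \<ge> 0\<close>, so \<open>E\<^sub>\<alpha> \<subseteq> {k}\<close>, and \<open>dim \<g>\<^sub>\<beta> = #E\<^sub>\<beta> = 0\<close>
  says \<open>\<beta> + e\<^sub>j \<in> supp(I)\<close> for all \<open>j\<close>; since \<open>I\<close> is full, every \<open>x^m \<in> I\<close> with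
  \<open>m\<^sub>k \<ge> 1\<close> is divisible by some \<open>x\<^sub>k x\<^sub>j\<close>, whence \<open>x^(m+\<alpha>) \<in> I\<close>.
\<close>

section \<open>Monomials in \<open>K[x]/I\<close>\<close>

lemma finite_exponents_below: "finite {a::'n::finite \<Rightarrow> nat. \<forall>i. a i \<le> m i}"
proof -
  have "{a::'n \<Rightarrow> nat. \<forall>i. a i \<le> m i} = Pi\<^sub>E UNIV (\<lambda>i. {..m i})"
    by (auto simp: PiE_UNIV_domain Pi_def)
  thus ?thesis by (simp add: finite_PiE)
qed

lemma sum_fun_apply: "(\<Sum>v\<in>A. F v) x = (\<Sum>v\<in>A. F v x)"
  by (induction A rule: infinite_finite_induct) auto

lemma qmono_mem_qalg: "qmono S m \<in> qalg S"
  by (auto simp: qalg_def qmono_def)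

lemma qmono_int_vanishes_on_support: "x \<in> S \<Longrightarrow> qmono_int S u x = 0"
  by (auto simp: qmono_int_def qmono_def)

lemma qalg_sum: "(\<forall>j\<in>A. h j \<in> qalg S) \<Longrightarrow> (\<lambda>x. \<Sum>j\<in>A. c j * h j x) \<in> qalg S"
  by (auto simp: qalg_def)

lemma qalg_expansion:
  assumes "f \<in> qalg S" "finite (- S)"
  shows "f = (\<lambda>x. \<Sum>m\<in>-S. f m * qmono S m x)"
proof
  fix x
  show "f x = (\<Sum>m\<in>-S. f m * qmono S m x)"
  proof (cases "x \<in> S")
    case True thus ?thesis using assms by (auto simp: qalg_def qmono_def intro!: sum.neutral)
  next
    case False
    have "(\<Sum>m\<in>-S. f m * qmono S m x) = (\<Sum>m\<in>-S. if m = x then f x else 0)"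
      by (intro sum.cong) (auto simp: qmono_def)
    also have "\<dots> = f x" using False assms(2) by simp
    finally show ?thesis by simp
  qed
qed

lemma qmult_qmono:
  fixes S :: "('n::finite \<Rightarrow> nat) set"
  assumes ms: "monomial_support S"
  shows "qmult S (qmono S u :: _ \<Rightarrow> 'k::field) (qmono S v) = qmono S (u + v)"
proof
  fix x
  show "qmult S (qmono S u :: _ \<Rightarrow> 'k) (qmono S v) x = qmono S (u + v) x"
  proof (cases "x \<in> S")
    case True thus ?thesis by (auto simp: qmult_def qmono_def)
  next
    case False
    have "qmult S (qmono S u :: _ \<Rightarrow> 'k) (qmono S v) x =
       (\<Sum>a\<in>{a. \<forall>i. a i \<le> x i}. if a = u then
          (if u \<notin> S \<and> (\<lambda>i. x i - u i) = v \<and> v \<notin> S then 1 else 0) else 0)"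
      using False unfolding qmult_def qmono_def by (simp only: if_False) (rule sum.cong; auto)
    also have "\<dots> = (if (\<forall>i. u i \<le> x i) \<and> u \<notin> S \<and> (\<lambda>i. x i - u i) = v \<and> v \<notin> S then 1 else 0)"
      by (simp add: finite_exponents_below)
    also have "\<dots> = qmono S (u + v) x"
    proof (cases "x = u + v")
      case True
      have "u \<notin> S" "v \<notin> S" using False True ms unfolding monomial_support_def by force+
      thus ?thesis using True False by (auto simp: qmono_def)
    next
      case neq: False
      have "\<not> ((\<forall>i. u i \<le> x i) \<and> (\<lambda>i. x i - u i) = v)"
      proof
        assume "(\<forall>i. u i \<le> x i) \<and> (\<lambda>i. x i - u i) = v"
        hence "x = u + v" by force
        thus False using neq by simp
      qed
      thus ?thesis using neq by (auto simp: qmono_def)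
    qed
    finally show ?thesis .
  qed
qed

lemma qmult_sum_left:
  "qmult S (\<lambda>x. \<Sum>j\<in>A. c j * F j x) G = (\<lambda>x. \<Sum>j\<in>A. c j * qmult S (F j) G x)"
  unfolding qmult_def
  by (auto simp: sum_distrib_right sum_distrib_left mult.assoc intro!: ext sum.swap)

lemma qmult_sum_right:
  "qmult S G (\<lambda>x. \<Sum>j\<in>A. c j * F j x) = (\<lambda>x. \<Sum>j\<in>A. c j * qmult S G (F j) x)"
  unfolding qmult_def
  by (auto simp: sum_distrib_right sum_distrib_left mult.assoc mult.left_commute intro!: ext sum.swap)

lemma qmult_scale_left: "qmult S (\<lambda>x. c * F x) G = (\<lambda>x. c * qmult S F G x)"
  using qmult_sum_left[where A = "{()}" and c = "\<lambda>_. c" and F = "\<lambda>_. F"] by simp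

lemma qmult_scale_right: "qmult S G (\<lambda>x. c * F x) = (\<lambda>x. c * qmult S G F x)"
  using qmult_sum_right[where A = "{()}" and c = "\<lambda>_. c" and F = "\<lambda>_. F"] by simp

lemma qmult_one_left:
  fixes S :: "('n::finite \<Rightarrow> nat) set"
  assumes ms: "monomial_support S" and fin: "finite (- S)" and f: "f \<in> qalg S"
  shows "qmult S (qmono S 0 :: _ \<Rightarrow> 'k::field) f = f"
  by (subst (1 2) qalg_expansion[OF f fin]) (simp add: qmult_sum_right qmult_qmono[OF ms])

lemma qmult_one_right:
  fixes S :: "('n::finite \<Rightarrow> nat) set"
  assumes ms: "monomial_support S" and fin: "finite (- S)" and f: "f \<in> qalg S"
  shows "qmult S f (qmono S 0 :: _ \<Rightarrow> 'k::field) = f"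
  by (subst (1 2) qalg_expansion[OF f fin]) (simp add: qmult_sum_left qmult_qmono[OF ms])

lemma qmult_expansion:
  fixes S :: "('n::finite \<Rightarrow> nat) set"
  assumes ms: "monomial_support S" and fin: "finite (- S)" and f: "f \<in> qalg S" and g: "g \<in> qalg S"
  shows "qmult S f (g :: _ \<Rightarrow> 'k::field) =
    (\<lambda>x. \<Sum>a\<in>-S. f a * (\<Sum>b\<in>-S. g b * qmono S (a + b) x))"
  by (subst qalg_expansion[OF f fin], subst qalg_expansion[OF g fin])
    (simp add: qmult_sum_left qmult_sum_right qmult_qmono[OF ms])

lemma qmult_qmono_int_left:
  fixes S :: "('n::finite \<Rightarrow> nat) set"
  assumes ms: "monomial_support S" and u: "nonneg u"
  shows "qmult S (qmono_int S u :: _ \<Rightarrow> 'k::field) (qmono S v) = qmono_int S (\<lambda>i. u i + int (v i))"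
proof -
  have "to_nat_vec (\<lambda>i. u i + int (v i)) = to_nat_vec u + v"
    using u by (auto simp: to_nat_vec_def nonneg_def nat_add_distrib)
  moreover have "nonneg (\<lambda>i. u i + int (v i))" using u by (auto simp: nonneg_def)
  ultimately show ?thesis using u by (simp add: qmono_int_def qmult_qmono[OF ms])
qed

lemma qmult_qmono_int_right:
  fixes S :: "('n::finite \<Rightarrow> nat) set"
  assumes ms: "monomial_support S" and u: "nonneg u"
  shows "qmult S (qmono S v) (qmono_int S u :: _ \<Rightarrow> 'k::field) = qmono_int S (\<lambda>i. int (v i) + u i)"
proof -
  have "to_nat_vec (\<lambda>i. int (v i) + u i) = v + to_nat_vec u"
    using u by (auto simp: to_nat_vec_def nonneg_def nat_add_distrib)
  moreover have "nonneg (\<lambda>i. int (v i) + u i)" using u by (auto simp: nonneg_def)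
  ultimately show ?thesis using u by (simp add: qmono_int_def qmult_qmono[OF ms])
qed

section \<open>Linear maps and the Leibniz rule\<close>

definition qlinear :: "('n \<Rightarrow> nat) set \<Rightarrow> ((('n \<Rightarrow> nat) \<Rightarrow> 'k::field) \<Rightarrow> (('n \<Rightarrow> nat) \<Rightarrow> 'k)) \<Rightarrow> bool"
  where "qlinear S D \<longleftrightarrow>
    (\<forall>f\<in>qalg S. \<forall>g\<in>qalg S. D (\<lambda>m. f m + g m) = (\<lambda>m. D f m + D g m)) \<and>
    (\<forall>c. \<forall>f\<in>qalg S. D (\<lambda>m. c * f m) = (\<lambda>m. c * D f m))"

lemma derivation_qlinear: "is_derivation S D \<Longrightarrow> qlinear S D"
  by (simp add: is_derivation_def qlinear_def)

lemma qlinear_zero: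
  assumes "qlinear S D"
  shows "D (\<lambda>_. 0) = (\<lambda>_. 0)"
proof -
  have "D (\<lambda>m. 0 * f m) = (\<lambda>m. 0 * D f m)" if "f \<in> qalg S" for f
    using assms that unfolding qlinear_def by blast
  from this[of "\<lambda>_. 0"] show ?thesis by (simp add: qalg_def)
qed

lemma qlinear_sum:
  assumes D: "qlinear S D" and "finite A" "\<forall>j\<in>A. h j \<in> qalg S"
  shows "D (\<lambda>x. \<Sum>j\<in>A. c j * h j x) = (\<lambda>x. \<Sum>j\<in>A. c j * D (h j) x)"
  using assms(2,3)
proof (induction A rule: finite_induct)
  case empty thus ?case using qlinear_zero[OF D] by simp
next
  case (insert a A)
  have "(\<lambda>x. c a * h a x) \<in> qalg S" "(\<lambda>x. \<Sum>j\<in>A. c j * h j x) \<in> qalg S"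
    using insert by (auto simp: qalg_def)
  with insert D show ?case by (simp add: qlinear_def)
qed

lemma qlinear_expansion:
  assumes "qlinear S D" "finite (- S)" "f \<in> qalg S"
  shows "D f = (\<lambda>x. \<Sum>m\<in>-S. f m * D (qmono S m) x)"
  using assms by (subst qalg_expansion[OF assms(3,2)]) (simp add: qlinear_sum qmono_mem_qalg)

lemma qlinear_leibniz_from_monomials:
  fixes S :: "('n::finite \<Rightarrow> nat) set" and D :: "(('n \<Rightarrow> nat) \<Rightarrow> 'k::field) \<Rightarrow> _"
  assumes ms: "monomial_support S" and fin: "finite (- S)" and D: "qlinear S D"
    and leibniz: "\<And>a b. a \<notin> S \<Longrightarrow> b \<notin> S \<Longrightarrow> D (qmono S (a + b)) =
        (\<lambda>x. qmult S (D (qmono S a)) (qmono S b) x + qmult S (qmono S a) (D (qmono S b)) x)"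
    and f: "f \<in> qalg S" and g: "g \<in> qalg S"
  shows "D (qmult S f g) = (\<lambda>m. qmult S (D f) g m + qmult S f (D g) m)"
proof -
  have inner: "D (\<lambda>x. \<Sum>b\<in>-S. g b * qmono S (a + b) x) =
      (\<lambda>x. \<Sum>b\<in>-S. g b * D (qmono S (a + b)) x)" for a
    using D fin by (intro qlinear_sum) (auto simp: qmono_mem_qalg)
  have "D (qmult S f g) = (\<lambda>x. \<Sum>a\<in>-S. f a * (\<Sum>b\<in>-S. g b * D (qmono S (a + b)) x))"
    using D fin unfolding qmult_expansion[OF ms fin f g]
    by (subst qlinear_sum) (auto simp: inner intro: qalg_sum qmono_mem_qalg)
  also have "\<dots> = (\<lambda>x. \<Sum>a\<in>-S. f a * (\<Sum>b\<in>-S. g b *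
      (qmult S (D (qmono S a)) (qmono S b) x + qmult S (qmono S a) (D (qmono S b)) x)))"
    by (auto simp: leibniz intro!: ext sum.cong)
  also have "\<dots> = (\<lambda>m. qmult S (D f) g m + qmult S f (D g) m)"
  proof -
    have "qmult S (D f) g =
        qmult S (\<lambda>x. \<Sum>a\<in>-S. f a * D (qmono S a) x) (\<lambda>x. \<Sum>b\<in>-S. g b * qmono S b x)"
      using qlinear_expansion[OF D fin f] qalg_expansion[OF g fin] by simp
    hence "qmult S (D f) g =
        (\<lambda>x. \<Sum>a\<in>-S. f a * (\<Sum>b\<in>-S. g b * qmult S (D (qmono S a)) (qmono S b) x))"
      by (simp add: qmult_sum_left qmult_sum_right)
    moreover have "qmult S f (D g) =
        qmult S (\<lambda>x. \<Sum>a\<in>-S. f a * qmono S a x) (\<lambda>x. \<Sum>b\<in>-S. g b * D (qmono S b) x)"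
      using qlinear_expansion[OF D fin g] qalg_expansion[OF f fin] by simp
    hence "qmult S f (D g) =
        (\<lambda>x. \<Sum>a\<in>-S. f a * (\<Sum>b\<in>-S. g b * qmult S (qmono S a) (D (qmono S b)) x))"
      by (simp add: qmult_sum_left qmult_sum_right)
    ultimately show ?thesis by (simp add: distrib_left sum.distrib)
  qed
  finally show ?thesis .
qed

section \<open>The operators \<open>x^\<alpha> \<Sum> c\<^sub>i x\<^sub>i \<partial>\<^sub>i\<close>\<close>

definition weighted_degree :: "('n::finite \<Rightarrow> nat) \<Rightarrow> ('n \<Rightarrow> 'k::semiring_1) \<Rightarrow> 'k"
  where "weighted_degree m c = (\<Sum>i\<in>UNIV. of_nat (m i) * c i)"

text \<open>The operator \<open>x^\<alpha> \<Sum> c\<^sub>i x\<^sub>i \<partial>\<^sub>i\<close>, sending \<open>x^m\<close> to \<open>\<langle>m, c\<rangle> x^(m+\<alpha>)\<close>.\<close>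

definition monomial_derivation :: "('n::finite \<Rightarrow> nat) set \<Rightarrow> ('n \<Rightarrow> int) \<Rightarrow> ('n \<Rightarrow> 'k::field)
    \<Rightarrow> (('n \<Rightarrow> nat) \<Rightarrow> 'k) \<Rightarrow> (('n \<Rightarrow> nat) \<Rightarrow> 'k)"
  where "monomial_derivation S \<alpha> c f =
    (if f \<in> qalg S
     then (\<lambda>x. \<Sum>m\<in>-S. f m * (weighted_degree m c * qmono_int S (\<lambda>i. int (m i) + \<alpha> i) x))
     else (\<lambda>_. 0))"

definition E_supported :: "('n \<Rightarrow> nat) set \<Rightarrow> ('n \<Rightarrow> int) \<Rightarrow> ('n \<Rightarrow> 'k::zero) \<Rightarrow> bool"
  where "E_supported S \<alpha> c \<longleftrightarrow> (\<forall>i. c i \<noteq> 0 \<longrightarrow> i \<in> E_set S \<alpha>)"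

text \<open>Every \<open>x^\<alpha> x\<^sub>i \<partial>\<^sub>i\<close> with \<open>i \<in> E\<^sub>\<alpha>\<close> maps \<open>I\<close> into \<open>I\<close>.\<close>

definition preserves_ideal :: "('n \<Rightarrow> nat) set \<Rightarrow> ('n \<Rightarrow> int) \<Rightarrow> bool"
  where "preserves_ideal S \<alpha> \<longleftrightarrow> (\<forall>m\<in>S. \<forall>i\<in>E_set S \<alpha>. 1 \<le> m i \<longrightarrow>
    nonneg (\<lambda>j. int (m j) + \<alpha> j) \<longrightarrow> to_nat_vec (\<lambda>j. int (m j) + \<alpha> j) \<in> S)"

lemma weighted_degree_add: "weighted_degree (a + b) c = weighted_degree a c + weighted_degree b c"
  by (simp add: weighted_degree_def sum.distrib distrib_right)

lemma weighted_degree_zero: "weighted_degree 0 c = 0"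
  by (simp add: weighted_degree_def)

lemma weighted_degree_unit_nat: "weighted_degree (unit_nat j) c = c j"
proof -
  have "weighted_degree (unit_nat j) c = (\<Sum>i\<in>UNIV. if i = j then c i else 0)"
    unfolding weighted_degree_def by (intro sum.cong) (auto simp: unit_nat_def)
  thus ?thesis by simp
qed

lemma weighted_degree_indicator: "weighted_degree m (indicator {i}) = of_nat (m i)"
proof -
  have "weighted_degree m (indicator {i}) = (\<Sum>j\<in>UNIV. if j = i then of_nat (m i) else 0)"
    unfolding weighted_degree_def by (intro sum.cong) (auto simp: indicator_def)
  thus ?thesis by simp
qed

lemma weighted_degree_nonzeroE:
  assumes "weighted_degree m c \<noteq> 0"
  obtains i where "c i \<noteq> 0" "1 \<le> m i"
proof -
  from assms obtain i where "of_nat (m i) * c i \<noteq> 0"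
    unfolding weighted_degree_def by (meson sum.neutral)
  hence "c i \<noteq> 0" "m i \<noteq> 0" by (rule contrapos_nn, simp)+
  thus ?thesis by (intro that) auto
qed

lemma E_supported_shift_nonneg:
  assumes "weighted_degree m c \<noteq> 0" "E_supported S \<alpha> c"
  shows "nonneg (\<lambda>j. int (m j) + \<alpha> j)"
proof -
  obtain i where "c i \<noteq> 0" "1 \<le> m i" using assms(1) by (rule weighted_degree_nonzeroE)
  hence mi: "1 \<le> m i" and \<alpha>: "\<And>j. 0 \<le> \<alpha> j + (if j = i then 1 else 0)"
    using assms(2) by (auto simp: E_supported_def E_set_def in_suppc_def nonneg_def add_int_def unit_int_def)
  show ?thesis unfolding nonneg_def
  proof
    fix j show "0 \<le> int (m j) + \<alpha> j" using \<alpha>[of j] mi by (cases "j = i") auto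
  qed
qed

lemma monomial_derivation_qmono:
  assumes "finite (- S)"
  shows "monomial_derivation S \<alpha> c (qmono S m) =
    (\<lambda>x. if m \<in> S then 0 else weighted_degree m c * qmono_int S (\<lambda>i. int (m i) + \<alpha> i) x)"
proof
  fix x
  have "(\<Sum>m'\<in>-S. qmono S m m' * (weighted_degree m' c * qmono_int S (\<lambda>i. int (m' i) + \<alpha> i) x)) =
      (\<Sum>m'\<in>-S. if m' = m then
        (if m \<in> S then 0 else weighted_degree m c * qmono_int S (\<lambda>i. int (m i) + \<alpha> i) x) else 0)"
    by (intro sum.cong) (auto simp: qmono_def)
  thus "monomial_derivation S \<alpha> c (qmono S m) x =
      (if m \<in> S then 0 else weighted_degree m c * qmono_int S (\<lambda>i. int (m i) + \<alpha> i) x)"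
    using assms by (simp add: monomial_derivation_def qmono_mem_qalg)
qed

lemma monomial_derivation_qmono_preserving:
  assumes fin: "finite (- S)" and "preserves_ideal S \<alpha>" and c: "E_supported S \<alpha> c"
  shows "monomial_derivation S \<alpha> c (qmono S m) =
    (\<lambda>x. weighted_degree m c * qmono_int S (\<lambda>i. int (m i) + \<alpha> i) x)"
proof -
  have "weighted_degree m c * qmono_int S (\<lambda>i. int (m i) + \<alpha> i) x = 0" if m: "m \<in> S" for x
  proof (cases "weighted_degree m c = 0")
    case False
    then obtain i where "c i \<noteq> 0" "1 \<le> m i" by (rule weighted_degree_nonzeroE)
    moreover have "nonneg (\<lambda>j. int (m j) + \<alpha> j)" using False c by (rule E_supported_shift_nonneg)
    ultimately have "to_nat_vec (\<lambda>j. int (m j) + \<alpha> j) \<in> S"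
      using assms(2) c m unfolding preserves_ideal_def E_supported_def by blast
    thus ?thesis by (simp add: qmono_int_def qmono_def)
  qed simp
  thus ?thesis using fin by (auto simp: monomial_derivation_qmono)
qed

lemma qlinear_monomial_derivation:
  fixes c :: "'n::finite \<Rightarrow> 'k::field"
  shows "qlinear S (monomial_derivation S \<alpha> c)"
  unfolding qlinear_def
proof (intro conjI ballI allI)
  fix f g :: "('n \<Rightarrow> nat) \<Rightarrow> 'k" assume "f \<in> qalg S" "g \<in> qalg S"
  moreover from this have "(\<lambda>m. f m + g m) \<in> qalg S" by (auto simp: qalg_def)
  ultimately show "monomial_derivation S \<alpha> c (\<lambda>m. f m + g m) =
      (\<lambda>m. monomial_derivation S \<alpha> c f m + monomial_derivation S \<alpha> c g m)"
    by (auto simp: monomial_derivation_def distrib_right sum.distrib)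
next
  fix k and f :: "('n \<Rightarrow> nat) \<Rightarrow> 'k" assume "f \<in> qalg S"
  moreover from this have "(\<lambda>m. k * f m) \<in> qalg S" by (auto simp: qalg_def)
  ultimately show "monomial_derivation S \<alpha> c (\<lambda>m. k * f m) = (\<lambda>m. k * monomial_derivation S \<alpha> c f m)"
    by (auto simp: monomial_derivation_def sum_distrib_left mult.assoc)
qed

lemma monomial_derivation_mem_qalg: "monomial_derivation S \<alpha> c f \<in> qalg S"
  by (auto simp: monomial_derivation_def qalg_def qmono_int_vanishes_on_support)

lemma monomial_derivation_product_rule:
  fixes S :: "('n::finite \<Rightarrow> nat) set" and c :: "'n \<Rightarrow> 'k::field"
  assumes ms: "monomial_support S" and fin: "finite (- S)" and c: "E_supported S \<alpha> c"
    and a: "a \<notin> S" and b: "b \<notin> S"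
  shows "qmult S (monomial_derivation S \<alpha> c (qmono S a)) (qmono S b) x
      + qmult S (qmono S a) (monomial_derivation S \<alpha> c (qmono S b)) x
    = weighted_degree (a + b) c * qmono_int S (\<lambda>i. int ((a + b) i) + \<alpha> i) x"
proof -
  let ?shift = "\<lambda>m i. int (m i) + \<alpha> i"
  have left: "weighted_degree a c * qmult S (qmono_int S (?shift a)) (qmono S b) x
      = weighted_degree a c * qmono_int S (?shift (a + b)) x"
  proof (cases "weighted_degree a c = 0")
    case False
    hence "nonneg (?shift a)" using c by (rule E_supported_shift_nonneg)
    moreover have "(\<lambda>i. ?shift a i + int (b i)) = ?shift (a + b)" by auto
    ultimately show ?thesis by (simp add: qmult_qmono_int_left[OF ms])
  qed simp
  have right: "weighted_degree b c * qmult S (qmono S a) (qmono_int S (?shift b)) x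
      = weighted_degree b c * qmono_int S (?shift (a + b)) x"
  proof (cases "weighted_degree b c = 0")
    case False
    hence "nonneg (?shift b)" using c by (rule E_supported_shift_nonneg)
    moreover have "(\<lambda>i. int (a i) + ?shift b i) = ?shift (a + b)" by auto
    ultimately show ?thesis by (simp add: qmult_qmono_int_right[OF ms])
  qed simp
  have "qmult S (monomial_derivation S \<alpha> c (qmono S a)) (qmono S b) x
      + qmult S (qmono S a) (monomial_derivation S \<alpha> c (qmono S b)) x
    = weighted_degree a c * qmult S (qmono_int S (?shift a)) (qmono S b) x
      + weighted_degree b c * qmult S (qmono S a) (qmono_int S (?shift b)) x"
    using a b by (simp add: monomial_derivation_qmono[OF fin] qmult_scale_left qmult_scale_right)
  also have "\<dots> = weighted_degree (a + b) c * qmono_int S (?shift (a + b)) x"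
    unfolding left right weighted_degree_add by (simp only: distrib_right)
  finally show ?thesis .
qed

lemma monomial_derivation_is_derivation:
  fixes S :: "('n::finite \<Rightarrow> nat) set" and c :: "'n \<Rightarrow> 'k::field"
  assumes ms: "monomial_support S" and fin: "finite (- S)"
    and pres: "preserves_ideal S \<alpha>" and c: "E_supported S \<alpha> c"
  shows "is_derivation S (monomial_derivation S \<alpha> c)"
proof -
  have "monomial_derivation S \<alpha> c (qmono S (a + b)) =
      (\<lambda>x. qmult S (monomial_derivation S \<alpha> c (qmono S a)) (qmono S b) x
        + qmult S (qmono S a) (monomial_derivation S \<alpha> c (qmono S b)) x)"
    if "a \<notin> S" "b \<notin> S" for a b
    by (rule ext, subst monomial_derivation_product_rule[OF ms fin c that])
      (simp add: monomial_derivation_qmono_preserving[OF fin pres c])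
  hence leibniz: "monomial_derivation S \<alpha> c (qmult S f g) =
      (\<lambda>m. qmult S (monomial_derivation S \<alpha> c f) g m + qmult S f (monomial_derivation S \<alpha> c g) m)"
    if "f \<in> qalg S" "g \<in> qalg S" for f g
    using qlinear_leibniz_from_monomials[OF ms fin qlinear_monomial_derivation] that by blast
  moreover have "monomial_derivation S \<alpha> c f = (\<lambda>_. 0)" if "f \<notin> qalg S" for f
    using that by (simp add: monomial_derivation_def)
  ultimately show ?thesis
    using qlinear_monomial_derivation[of S \<alpha> c] monomial_derivation_mem_qalg
    unfolding is_derivation_def qlinear_def by blast
qed

lemma monomial_derivation_mem_weight_space:
  fixes S :: "('n::finite \<Rightarrow> nat) set" and c :: "'n \<Rightarrow> 'k::field"
  assumes ms: "monomial_support S" and fin: "finite (- S)"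
    and pres: "preserves_ideal S \<alpha>" and c: "E_supported S \<alpha> c"
  shows "monomial_derivation S \<alpha> c \<in> weight_space S \<alpha>"
  using monomial_derivation_is_derivation[OF assms]
  by (auto simp: weight_space_def monomial_derivation_qmono_preserving[OF fin pres c])

section \<open>Weight vectors are of this form\<close>

lemma derivation_qmono_zero:
  fixes S :: "('n::finite \<Rightarrow> nat) set" and D :: "(('n \<Rightarrow> nat) \<Rightarrow> 'k::field) \<Rightarrow> _"
  assumes ms: "monomial_support S" and fin: "finite (- S)" and D: "is_derivation S D"
  shows "D (qmono S 0) = (\<lambda>_. 0)"
proof -
  have D1: "D (qmono S 0) \<in> qalg S" using D qmono_mem_qalg by (auto simp: is_derivation_def)
  have "D (qmono S 0) = D (qmult S (qmono S 0) (qmono S 0))"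
    by (simp add: qmult_qmono[OF ms])
  also have "\<dots> = (\<lambda>x. qmult S (D (qmono S 0)) (qmono S 0) x + qmult S (qmono S 0) (D (qmono S 0)) x)"
    using D qmono_mem_qalg unfolding is_derivation_def by blast
  also have "\<dots> = (\<lambda>x. D (qmono S 0) x + D (qmono S 0) x)"
    by (simp only: qmult_one_left[OF ms fin D1] qmult_one_right[OF ms fin D1])
  finally have double: "D (qmono S 0) = (\<lambda>x. D (qmono S 0) x + D (qmono S 0) x)" .
  show ?thesis
  proof
    fix x show "D (qmono S 0) x = 0" using fun_cong[OF double, of x] by (metis add_cancel_left_right)
  qed
qed

lemma exponent_induct [case_names zero step]:
  fixes m :: "'n::finite \<Rightarrow> nat"
  assumes zero: "P 0" and step: "\<And>m j. P m \<Longrightarrow> P (m + unit_nat j)"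
  shows "P m"
proof (induction "sum m UNIV" arbitrary: m)
  case 0
  hence "m = 0" by (auto simp: fun_eq_iff)
  thus ?case using zero by (simp add: zero_fun_def)
next
  case (Suc n)
  then obtain j where "m j \<noteq> 0" by (metis sum.neutral nat.distinct(1))
  define m' where "m' = m(j := m j - 1)"
  have m: "m = m' + unit_nat j" using \<open>m j \<noteq> 0\<close> by (auto simp: m'_def unit_nat_def)
  hence "sum m' UNIV = n"
    using Suc.hyps(2) by (simp add: sum.distrib unit_nat_def)
  thus ?case unfolding m by (intro step Suc.hyps(1)) simp
qed

text \<open>Here the operator need not be a derivation: its Leibniz rule is only needed for
  products of monomials outside \<open>I\<close>.\<close>

lemma derivation_eq_monomial_derivationI:
  fixes S :: "('n::finite \<Rightarrow> nat) set" and D :: "(('n \<Rightarrow> nat) \<Rightarrow> 'k::field) \<Rightarrow> _"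
  assumes ms: "monomial_support S" and fin: "finite (- S)" and D: "is_derivation S D"
    and c: "E_supported S \<alpha> c"
    and generator: "\<And>i. D (qmono S (unit_nat i)) = monomial_derivation S \<alpha> c (qmono S (unit_nat i))"
  shows "D = monomial_derivation S \<alpha> c"
proof -
  have W0: "monomial_derivation S \<alpha> c (qmono S 0) = (\<lambda>_. 0)"
    by (intro ext) (simp add: monomial_derivation_qmono[OF fin] weighted_degree_zero)
  have monomial: "D (qmono S m) = monomial_derivation S \<alpha> c (qmono S m)" if "m \<notin> S" for m
    using that
  proof (induction m rule: exponent_induct)
    case zero
    thus ?case using W0 derivation_qmono_zero[OF ms fin D] by (simp add: zero_fun_def)
  next
    case (step m j)
    have mj: "m + unit_nat j \<notin> S" using step.prems by (simp add: plus_fun_def)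
    hence "m \<notin> S" "unit_nat j \<notin> S"
      using ms unfolding monomial_support_def by (metis le_add1 le_add2 plus_fun_apply)+
    have "D (qmono S (m + unit_nat j)) = D (qmult S (qmono S m) (qmono S (unit_nat j)))"
      by (simp add: qmult_qmono[OF ms])
    also have "\<dots> = (\<lambda>x. qmult S (D (qmono S m)) (qmono S (unit_nat j)) x
        + qmult S (qmono S m) (D (qmono S (unit_nat j))) x)"
      using D qmono_mem_qalg unfolding is_derivation_def by blast
    also have "\<dots> = (\<lambda>x. qmult S (monomial_derivation S \<alpha> c (qmono S m)) (qmono S (unit_nat j)) x
        + qmult S (qmono S m) (monomial_derivation S \<alpha> c (qmono S (unit_nat j))) x)"
      using step.IH \<open>m \<notin> S\<close> by (simp add: generator)
    also have "\<dots> = monomial_derivation S \<alpha> c (qmono S (m + unit_nat j))"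
      by (rule ext, subst monomial_derivation_product_rule[OF ms fin c \<open>m \<notin> S\<close> \<open>unit_nat j \<notin> S\<close>])
        (simp add: monomial_derivation_qmono[OF fin] mj)
    finally show ?case .
  qed
  show ?thesis
  proof
    fix f
    show "D f = monomial_derivation S \<alpha> c f"
    proof (cases "f \<in> qalg S")
      case True
      thus ?thesis using monomial
        by (simp add: qlinear_expansion[OF derivation_qlinear[OF D] fin]
            qlinear_expansion[OF qlinear_monomial_derivation fin])
    next
      case False
      thus ?thesis using D by (simp add: is_derivation_def monomial_derivation_def)
    qed
  qed
qed

lemma weight_space_memE:
  fixes S :: "('n::finite \<Rightarrow> nat) set" and D :: "(('n \<Rightarrow> nat) \<Rightarrow> 'k::field) \<Rightarrow> _"
  assumes ms: "monomial_support S" and fin: "finite (- S)" and "D \<in> weight_space S \<alpha>"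
  obtains c where "E_supported S \<alpha> c" "D = monomial_derivation S \<alpha> c"
proof -
  have D: "is_derivation S D"
    and weight: "\<And>m. \<exists>k. D (qmono S m) = (\<lambda>x. k * qmono_int S (\<lambda>i. int (m i) + \<alpha> i) x)"
    using assms(3) by (auto simp: weight_space_def)
  text \<open>For \<open>i \<notin> E\<^sub>\<alpha>\<close> the monomial \<open>x^(\<alpha>+e\<^sub>i)\<close> vanishes, so the coefficient may be taken to be 0.\<close>
  define c where "c i = (if i \<in> E_set S \<alpha> then SOME k. D (qmono S (unit_nat i)) =
      (\<lambda>x. k * qmono_int S (\<lambda>j. int (unit_nat i j) + \<alpha> j) x) else 0)" for i
  have c: "E_supported S \<alpha> c" by (auto simp: E_supported_def c_def)
  have "D (qmono S (unit_nat i)) = monomial_derivation S \<alpha> c (qmono S (unit_nat i))" for i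
  proof (cases "unit_nat i \<in> S")
    case True
    hence "(qmono S (unit_nat i) :: _ \<Rightarrow> 'k) = (\<lambda>_. 0)" by (auto simp: qmono_def)
    hence "D (qmono S (unit_nat i)) = (\<lambda>_. 0)" using qlinear_zero[OF derivation_qlinear[OF D]] by simp
    thus ?thesis using True by (simp add: monomial_derivation_qmono[OF fin])
  next
    case False
    have "(\<lambda>j. int (unit_nat i j) + \<alpha> j) = add_int \<alpha> (unit_int i)"
      by (auto simp: add_int_def unit_int_def unit_nat_def)
    hence "i \<notin> E_set S \<alpha> \<Longrightarrow> qmono_int S (\<lambda>j. int (unit_nat i j) + \<alpha> j) = (\<lambda>_. 0 :: 'k)"
      by (auto simp: E_set_def in_suppc_def qmono_int_def qmono_def)
    moreover have "i \<in> E_set S \<alpha> \<Longrightarrow>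
        D (qmono S (unit_nat i)) = (\<lambda>x. c i * qmono_int S (\<lambda>j. int (unit_nat i j) + \<alpha> j) x)"
      unfolding c_def using someI_ex[OF weight] by simp
    ultimately have "D (qmono S (unit_nat i)) = (\<lambda>x. c i * qmono_int S (\<lambda>j. int (unit_nat i j) + \<alpha> j) x)"
      using weight[of "unit_nat i"] by (cases "i \<in> E_set S \<alpha>") (auto simp: c_def)
    thus ?thesis using False by (simp add: monomial_derivation_qmono[OF fin] weighted_degree_unit_nat)
  qed
  thus ?thesis using that c derivation_eq_monomial_derivationI[OF ms fin D c] by blast
qed

section \<open>Dimension of the weight spaces\<close>

lemma vector_space_dscale:
  "vector_space (dscale :: 'k::field \<Rightarrow> ((('n \<Rightarrow> nat) \<Rightarrow> 'k) \<Rightarrow> (('n \<Rightarrow> nat) \<Rightarrow> 'k)) \<Rightarrow> _)"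
  by unfold_locales (auto simp: dscale_def algebra_simps intro!: ext)

lemma monomial_derivation_eq_sum:
  fixes S :: "('n::finite \<Rightarrow> nat) set" and c :: "'n \<Rightarrow> 'k::field"
  assumes "E_supported S \<alpha> c"
  shows "monomial_derivation S \<alpha> c f x =
    (\<Sum>i\<in>E_set S \<alpha>. c i * monomial_derivation S \<alpha> (indicator {i}) f x)"
proof (cases "f \<in> qalg S")
  case True
  have "weighted_degree m c = (\<Sum>i\<in>E_set S \<alpha>. c i * of_nat (m i))" for m
  proof -
    have "weighted_degree m c = (\<Sum>i\<in>UNIV. if i \<in> E_set S \<alpha> then c i * of_nat (m i) else 0)"
      unfolding weighted_degree_def using assms unfolding E_supported_def by (intro sum.cong) auto
    thus ?thesis by (simp add: sum.If_cases)
  qed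
  with True show ?thesis
    by (simp add: monomial_derivation_def weighted_degree_indicator sum_distrib_left
        sum_distrib_right mult_ac sum.swap[where A = "-S"])
qed (simp add: monomial_derivation_def)

lemma monomial_derivation_indicator_on_generator:
  fixes S :: "('n::finite \<Rightarrow> nat) set"
  assumes fin: "finite (- S)" and full: "full_support S" and j: "j \<in> E_set S \<alpha>"
  shows "monomial_derivation S \<alpha> (indicator {i} :: _ \<Rightarrow> 'k::field) (qmono S (unit_nat j))
    (to_nat_vec (add_int \<alpha> (unit_int j))) = (if i = j then 1 else 0)"
proof -
  have "(\<lambda>k. int (unit_nat j k) + \<alpha> k) = add_int \<alpha> (unit_int j)"
    by (auto simp: add_int_def unit_int_def unit_nat_def)
  moreover have "qmono_int S (add_int \<alpha> (unit_int j)) (to_nat_vec (add_int \<alpha> (unit_int j))) = (1::'k)"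
    using j by (simp add: E_set_def in_suppc_def qmono_int_def qmono_def)
  moreover have "unit_nat j \<notin> S" using full by (simp add: full_support_def)
  ultimately show ?thesis
    by (simp add: monomial_derivation_qmono[OF fin] weighted_degree_indicator) (simp add: unit_nat_def)
qed

theorem dim_weight_eq_card_E_set:
  fixes S :: "('n::finite \<Rightarrow> nat) set" and K :: "'k::field itself"
  assumes ms: "monomial_support S" and full: "full_support S" and fin: "finite (- S)"
    and pres: "preserves_ideal S \<alpha>"
  shows "dim_weight S \<alpha> K = card (E_set S \<alpha>)"
proof -
  interpret V: vector_space "dscale :: 'k \<Rightarrow> ((('n \<Rightarrow> nat) \<Rightarrow> 'k) \<Rightarrow> (('n \<Rightarrow> nat) \<Rightarrow> 'k)) \<Rightarrow> _"
    by (rule vector_space_dscale)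
  let ?E = "E_set S \<alpha>"
  let ?W = "\<lambda>i. monomial_derivation S \<alpha> (indicator {i} :: 'n \<Rightarrow> 'k)"
  define coeff where "coeff j D = D (qmono S (unit_nat j)) (to_nat_vec (add_int \<alpha> (unit_int j)))"
    for j and D :: "(('n \<Rightarrow> nat) \<Rightarrow> 'k) \<Rightarrow> (('n \<Rightarrow> nat) \<Rightarrow> 'k)"
  have coeff_W: "i \<in> ?E \<Longrightarrow> j \<in> ?E \<Longrightarrow> coeff j (?W i) = (if i = j then 1 else 0)" for i j
    unfolding coeff_def by (rule monomial_derivation_indicator_on_generator[OF fin full])
  have inj: "inj_on ?W ?E"
  proof (rule inj_onI)
    fix i j assume i: "i \<in> ?E" and j: "j \<in> ?E" and eq: "?W i = ?W j"
    have "coeff j (?W i) = 1" unfolding eq using coeff_W[OF j j] by simp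
    thus "i = j" using coeff_W[OF i j] by (simp split: if_splits)
  qed
  have E_supported: "E_supported S \<alpha> (indicator {i} :: 'n \<Rightarrow> 'k)" if "i \<in> ?E" for i
    using that by (auto simp: E_supported_def indicator_def split: if_splits)
  show ?thesis unfolding dim_weight_def
  proof (rule V.dim_unique)
    show "?W ` ?E \<subseteq> weight_space S \<alpha>"
      using monomial_derivation_mem_weight_space[OF ms fin pres E_supported] by blast
  next
    show "weight_space S \<alpha> \<subseteq> V.span (?W ` ?E)"
    proof
      fix D :: "(('n \<Rightarrow> nat) \<Rightarrow> 'k) \<Rightarrow> (('n \<Rightarrow> nat) \<Rightarrow> 'k)"
      assume "D \<in> weight_space S \<alpha>"
      then obtain c where c: "E_supported S \<alpha> c" and D: "D = monomial_derivation S \<alpha> c"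
        by (rule weight_space_memE[OF ms fin])
      have "D = (\<Sum>i\<in>?E. dscale (c i) (?W i))"
        unfolding D by (intro ext) (simp add: sum_fun_apply dscale_def monomial_derivation_eq_sum[OF c])
      also have "\<dots> \<in> V.span (?W ` ?E)"
        by (intro V.span_sum V.span_scale V.span_base) auto
      finally show "D \<in> V.span (?W ` ?E)" .
    qed
  next
    have "u v = 0" if t: "finite t" "t \<subseteq> ?W ` ?E" and sum0: "(\<Sum>w\<in>t. dscale (u w) w) = 0"
      and v: "v \<in> t" for t u v
    proof -
      obtain j where j: "j \<in> ?E" "v = ?W j" using t(2) v by blast
      have dual: "coeff j w = (if w = v then 1 else 0)" if w: "w \<in> t" for w
      proof -
        obtain i where i: "i \<in> ?E" "w = ?W i" using w t(2) by blast
        hence "w = v \<longleftrightarrow> i = j" using j inj_on_eq_iff[OF inj i(1) j(1)] by simp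
        thus ?thesis using coeff_W[OF i(1) j(1)] i(2) by simp
      qed
      have "coeff j (\<Sum>w\<in>t. dscale (u w) w) = (\<Sum>w\<in>t. u w * coeff j w)"
        by (simp add: coeff_def sum_fun_apply dscale_def)
      also have "\<dots> = (\<Sum>w\<in>t. if w = v then u w else 0)"
        by (rule sum.cong) (simp_all add: dual)
      also have "\<dots> = u v" using t(1) v by simp
      finally show "u v = 0" using sum0 by (simp add: coeff_def)
    qed
    thus "V.independent (?W ` ?E)"
      unfolding V.independent_explicit_module by blast
  next
    show "card (?W ` ?E) = card ?E" by (rule card_image[OF inj])
  qed
qed

section \<open>Stability of \<open>I\<close> in the two cases\<close>

lemma preserves_ideal_of_nonneg:
  assumes "monomial_support S" and "nonneg \<alpha>"
  shows "preserves_ideal S \<alpha>"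
  unfolding preserves_ideal_def
proof (intro ballI impI)
  fix m assume "m \<in> S"
  moreover have "\<forall>j. m j \<le> to_nat_vec (\<lambda>j. int (m j) + \<alpha> j) j"
    using assms(2) by (auto simp: nonneg_def to_nat_vec_def le_nat_iff)
  ultimately show "to_nat_vec (\<lambda>j. int (m j) + \<alpha> j) \<in> S"
    using assms(1) unfolding monomial_support_def by blast
qed

lemma E_set_minus_unit:
  assumes "\<not> nonneg \<alpha>" and "nonneg (add_int \<alpha> (unit_int k))"
  shows "E_set S \<alpha> = (if in_suppc S (add_int \<alpha> (unit_int k)) then {k} else {})"
proof -
  have shifted: "0 \<le> \<alpha> j + (if j = k then 1 else 0)" for j
    using assms(2) by (auto simp: nonneg_def add_int_def unit_int_def)
  obtain j where "\<alpha> j < 0" using assms(1) by (auto simp: nonneg_def not_le)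
  with shifted[of j] have "\<alpha> k < 0" by (cases "j = k") auto
  have "\<not> nonneg (add_int \<alpha> (unit_int i))" if "i \<noteq> k" for i
  proof
    assume "nonneg (add_int \<alpha> (unit_int i))"
    hence "0 \<le> \<alpha> k + (if k = i then 1 else 0)" by (simp add: nonneg_def add_int_def unit_int_def)
    thus False using that \<open>\<alpha> k < 0\<close> by simp
  qed
  hence "i \<in> E_set S \<alpha> \<longleftrightarrow> i = k \<and> in_suppc S (add_int \<alpha> (unit_int k))" for i
    by (cases "i = k") (auto simp: E_set_def in_suppc_def)
  thus ?thesis by auto
qed

text \<open>With \<open>\<beta> = \<alpha> + e\<^sub>k\<close>: a monomial \<open>x^m \<in> I\<close> with \<open>m\<^sub>k \<ge> 1\<close> is not \<open>x\<^sub>k\<close>, as \<open>I\<close> is full,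
  so it is divisible by some \<open>x\<^sub>k x\<^sub>j\<close>; then \<open>x^(m+\<alpha>)\<close> is divisible by \<open>x^(\<beta>+e\<^sub>j) \<in> I\<close>.\<close>

lemma preserves_ideal_of_E_set_empty:
  fixes S :: "('n \<Rightarrow> nat) set"
  assumes ms: "monomial_support S" and full: "full_support S"
    and \<alpha>: "\<not> nonneg \<alpha>" and \<beta>: "nonneg (add_int \<alpha> (unit_int k))"
    and E\<beta>: "E_set S (add_int \<alpha> (unit_int k)) = {}"
  shows "preserves_ideal S \<alpha>"
  unfolding preserves_ideal_def
proof (intro ballI impI)
  fix m i assume m: "m \<in> S" and i: "i \<in> E_set S \<alpha>" and mi: "1 \<le> m i"
  have mk: "1 \<le> m k" using mi i E_set_minus_unit[OF \<alpha> \<beta>, of S] by (auto split: if_splits)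
  have "m \<noteq> unit_nat k" using m full by (auto simp: full_support_def)
  then obtain j where "m j \<noteq> unit_nat k j" by auto
  hence j: "unit_nat k j + 1 \<le> m j" using mk by (cases "j = k") (auto simp: unit_nat_def)
  let ?\<gamma> = "add_int (add_int \<alpha> (unit_int k)) (unit_int j)"
  have "nonneg ?\<gamma>" using \<beta> by (auto simp: nonneg_def add_int_def unit_int_def)
  moreover have "j \<notin> E_set S (add_int \<alpha> (unit_int k))" using E\<beta> by simp
  ultimately have "to_nat_vec ?\<gamma> \<in> S" by (simp add: E_set_def in_suppc_def)
  moreover have "\<forall>l. to_nat_vec ?\<gamma> l \<le> to_nat_vec (\<lambda>j. int (m j) + \<alpha> j) l"
    using j mk
    by (auto simp: to_nat_vec_def add_int_def unit_int_def unit_nat_def split: if_splits)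
  ultimately show "to_nat_vec (\<lambda>j. int (m j) + \<alpha> j) \<in> S"
    using ms unfolding monomial_support_def by blast
qed

theorem lemma3p1:
  fixes S :: "('n::finite \<Rightarrow> nat) set"
    and \<alpha> :: "'n \<Rightarrow> int"
    and K :: "'k::field_char_0 itself"
  assumes "monomial_support S"
    and "full_support S"
    and "finite (- S)"
  shows "(nonneg \<alpha> \<longrightarrow> dim_weight S \<alpha> K = card (E_set S \<alpha>))
    \<and> (\<forall>k. \<not> nonneg \<alpha> \<and> nonneg (add_int \<alpha> (unit_int k))
           \<and> dim_weight S (add_int \<alpha> (unit_int k)) K = 0
         \<longrightarrow> dim_weight S \<alpha> K = card (E_set S \<alpha>)
             \<and> card (E_set S \<alpha>) = (if in_suppc S (add_int \<alpha> (unit_int k)) then 1 else 0))"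
proof (intro conjI impI allI)
  assume "nonneg \<alpha>"
  thus "dim_weight S \<alpha> K = card (E_set S \<alpha>)"
    by (intro dim_weight_eq_card_E_set assms preserves_ideal_of_nonneg)
next
  fix k
  assume "\<not> nonneg \<alpha> \<and> nonneg (add_int \<alpha> (unit_int k)) \<and> dim_weight S (add_int \<alpha> (unit_int k)) K = 0"
  hence \<alpha>: "\<not> nonneg \<alpha>" and \<beta>: "nonneg (add_int \<alpha> (unit_int k))"
    and dim\<beta>: "dim_weight S (add_int \<alpha> (unit_int k)) K = 0" by auto
  have "card (E_set S (add_int \<alpha> (unit_int k))) = 0"
    using dim\<beta> dim_weight_eq_card_E_set[OF assms preserves_ideal_of_nonneg[OF assms(1) \<beta>], of K]
    by simp
  hence "E_set S (add_int \<alpha> (unit_int k)) = {}" by simp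
  thus "dim_weight S \<alpha> K = card (E_set S \<alpha>)"
    by (intro dim_weight_eq_card_E_set assms preserves_ideal_of_E_set_empty[OF assms(1,2) \<alpha> \<beta>])
  show "card (E_set S \<alpha>) = (if in_suppc S (add_int \<alpha> (unit_int k)) then 1 else 0)"
    using E_set_minus_unit[OF \<alpha> \<beta>] by simp
qed

end
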